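(* Let $\omega$ be a normalized 3-cocycle on a finite group $G$ with values in $\mathbb{K}^\times$ (i.e. $\omega(x,y,z)\omega(w,xy,z)\omega(w,x,y)=\omega(w,x,yz)\omega(wx,y,z)$ and $\omega(x,y,z)=1$ if one of $x,y,z$ is $e$). For $g,h,x,y\in G$ define $$\gamma_{g,h}(x)=\frac{\omega(g,h,x)\,\omega(ghxh^{-1}g^{-1},g,h)}{\omega(g,hxh^{-1},h)},\qquad \mu_g(x,y)=\frac{\omega(gxg^{-1},g,y)}{\omega(gxg^{-1},gyg^{-1},g)\,\omega(g,x,y)}.$$ Then $(\omega,\gamma,\mu,1)$ is a quasi-abelian 3-cocycle on the crossed module $(G,G,\mathrm{id}_G)$, where $G$ acts on itself by conjugation ${}^gx=gxg^{-1}$.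
   Context: $\mathbb{K}$ is an algebraically closed field of characteristic $0$. For a finite crossed module $(G,X,\partial)$ ($G$ acting on $X$ by automorphisms $(g,x)\mapsto{}^gx$, $\partial:X\to G$ a homomorphism with ${}^{\partial(x)}x'=xx'x^{-1}$, $\partial({}^gx)=g\partial(x)g^{-1}$), a quasi-abelian 3-cocycle is a quadruple $(\omega,\gamma,\mu,c)$ of functions $\omega:X^3\to\mathbb{K}^\times$, $(g,h,x)\mapsto\gamma_{g,h}(x)$ on $G\times G\times X$, $(g,x,y)\mapsto\mu_g(x,y)$ on $G\times X\times X$, $c:X^2\to\mathbb{K}^\times$, such that for all $g,h,k\in G$, $w,x,y,z\in X$: (a) $\omega(x,y,z)\omega(w,xy,z)\omega(w,x,y)=\omega(w,x,yz)\omega(wx,y,z)$; (b) $\gamma_{h,k}(x)\gamma_{g,hk}(x)=\gamma_{gh,k}(x)\gamma_{g,h}({}^kx)$; (c) $\frac{\mu_g(y,z)\mu_g(x,yz)}{\mu_g(xy,z)\mu_g(x,y)}=\frac{\omega({}^gx,{}^gy,{}^gz)}{\omega(x,y,z)}$; (d) $\frac{\gamma_{g,h}(x)\gamma_{g,h}(y)}{\gamma_{g,h}(xy)}=\frac{\mu_g({}^hx,{}^hy)\mu_h(x,y)}{\mu_{gh}(x,y)}$; (e) $\frac{c({}^gx,{}^gy)}{c(x,y)}=\frac{\mu_g(xyx^{-1},x)}{\mu_g(x,y)}\cdot\frac{\gamma_{g\partial(x)g^{-1},g}(y)}{\gamma_{g,\partial(x)}(y)}$; (f) $c(xy,z)=\frac{\omega(x,y,z)\,\omega((xy)z(xy)^{-1},x,y)}{\omega(x,yzy^{-1},y)\,\gamma_{\partial(x),\partial(y)}(z)}\,c(x,yzy^{-1})\,c(y,z)$;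 (g) $c(x,yz)=\frac{\omega(xyx^{-1},x,z)}{\omega(x,y,z)\,\omega(xyx^{-1},xzx^{-1},x)\,\mu_{\partial(x)}(y,z)}\,c(x,y)\,c(x,z)$. Here $1$ denotes the constant function $c\equiv1$. *)

theory Defs
  imports "HOL-Algebra.Group" "HOL-Computational_Algebra.Polynomial"
begin

definition alg_closed :: "'k::field itself \<Rightarrow> bool" where
  "alg_closed _ \<longleftrightarrow> (\<forall>p::'k poly. degree p > 0 \<longrightarrow> (\<exists>x. poly p x = 0))"

definition normalized_3cocycle :: "('g,'a) monoid_scheme \<Rightarrow> ('g \<Rightarrow> 'g \<Rightarrow> 'g \<Rightarrow> 'k::field) \<Rightarrow> bool" where
  "normalized_3cocycle G \<omega> \<longleftrightarrow>
     (\<forall>x\<in>carrier G. \<forall>y\<in>carrier G. \<forall>z\<in>carrier G. \<omega> x y z \<noteq> 0) \<and>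
     (\<forall>w\<in>carrier G. \<forall>x\<in>carrier G. \<forall>y\<in>carrier G. \<forall>z\<in>carrier G.
        \<omega> x y z * \<omega> w (x \<otimes>\<^bsub>G\<^esub> y) z * \<omega> w x y
        = \<omega> w x (y \<otimes>\<^bsub>G\<^esub> z) * \<omega> (w \<otimes>\<^bsub>G\<^esub> x) y z) \<and>
     (\<forall>x\<in>carrier G. \<forall>y\<in>carrier G. \<forall>z\<in>carrier G.
        (x = \<one>\<^bsub>G\<^esub> \<or> y = \<one>\<^bsub>G\<^esub> \<or> z = \<one>\<^bsub>G\<^esub>) \<longrightarrow> \<omega> x y z = 1)"

definition quasi_abelian_3cocycle ::
  "('g,'a) monoid_scheme \<Rightarrow> ('x,'b) monoid_scheme \<Rightarrow> ('g \<Rightarrow> 'x \<Rightarrow> 'x) \<Rightarrow> ('x \<Rightarrow> 'g)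
   \<Rightarrow> ('x \<Rightarrow> 'x \<Rightarrow> 'x \<Rightarrow> 'k::field) \<Rightarrow> ('g \<Rightarrow> 'g \<Rightarrow> 'x \<Rightarrow> 'k) \<Rightarrow> ('g \<Rightarrow> 'x \<Rightarrow> 'x \<Rightarrow> 'k)
   \<Rightarrow> ('x \<Rightarrow> 'x \<Rightarrow> 'k) \<Rightarrow> bool" where
  "quasi_abelian_3cocycle G X act bd \<omega> \<gamma> \<mu> c \<longleftrightarrow>
    (\<forall>x\<in>carrier X. \<forall>y\<in>carrier X. \<forall>z\<in>carrier X. \<omega> x y z \<noteq> 0) \<and>
    (\<forall>g\<in>carrier G. \<forall>h\<in>carrier G. \<forall>x\<in>carrier X. \<gamma> g h x \<noteq> 0) \<and>
    (\<forall>g\<in>carrier G. \<forall>x\<in>carrier X. \<forall>y\<in>carrier X. \<mu> g x y \<noteq> 0) \<and>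
    (\<forall>x\<in>carrier X. \<forall>y\<in>carrier X. c x y \<noteq> 0) \<and>
    (\<forall>w\<in>carrier X. \<forall>x\<in>carrier X. \<forall>y\<in>carrier X. \<forall>z\<in>carrier X.
        \<omega> x y z * \<omega> w (x \<otimes>\<^bsub>X\<^esub> y) z * \<omega> w x y
        = \<omega> w x (y \<otimes>\<^bsub>X\<^esub> z) * \<omega> (w \<otimes>\<^bsub>X\<^esub> x) y z) \<and>
    (\<forall>g\<in>carrier G. \<forall>h\<in>carrier G. \<forall>k\<in>carrier G. \<forall>x\<in>carrier X.
        \<gamma> h k x * \<gamma> g (h \<otimes>\<^bsub>G\<^esub> k) x = \<gamma> (g \<otimes>\<^bsub>G\<^esub> h) k x * \<gamma> g h (act k x)) \<and>
    (\<forall>g\<in>carrier G. \<forall>x\<in>carrier X. \<forall>y\<in>carrier X. \<forall>z\<in>carrier X.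
        (\<mu> g y z * \<mu> g x (y \<otimes>\<^bsub>X\<^esub> z)) / (\<mu> g (x \<otimes>\<^bsub>X\<^esub> y) z * \<mu> g x y)
        = \<omega> (act g x) (act g y) (act g z) / \<omega> x y z) \<and>
    (\<forall>g\<in>carrier G. \<forall>h\<in>carrier G. \<forall>x\<in>carrier X. \<forall>y\<in>carrier X.
        (\<gamma> g h x * \<gamma> g h y) / \<gamma> g h (x \<otimes>\<^bsub>X\<^esub> y)
        = (\<mu> g (act h x) (act h y) * \<mu> h x y) / \<mu> (g \<otimes>\<^bsub>G\<^esub> h) x y) \<and>
    (\<forall>g\<in>carrier G. \<forall>x\<in>carrier X. \<forall>y\<in>carrier X.
        c (act g x) (act g y) / c x y
        = (\<mu> g (x \<otimes>\<^bsub>X\<^esub> y \<otimes>\<^bsub>X\<^esub> inv\<^bsub>X\<^esub> x) x / \<mu> g x y)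
          * (\<gamma> (g \<otimes>\<^bsub>G\<^esub> bd x \<otimes>\<^bsub>G\<^esub> inv\<^bsub>G\<^esub> g) g y / \<gamma> g (bd x) y)) \<and>
    (\<forall>x\<in>carrier X. \<forall>y\<in>carrier X. \<forall>z\<in>carrier X.
        c (x \<otimes>\<^bsub>X\<^esub> y) z
        = (\<omega> x y z * \<omega> ((x \<otimes>\<^bsub>X\<^esub> y) \<otimes>\<^bsub>X\<^esub> z \<otimes>\<^bsub>X\<^esub> inv\<^bsub>X\<^esub> (x \<otimes>\<^bsub>X\<^esub> y)) x y)
          / (\<omega> x (y \<otimes>\<^bsub>X\<^esub> z \<otimes>\<^bsub>X\<^esub> inv\<^bsub>X\<^esub> y) y * \<gamma> (bd x) (bd y) z)
          * c x (y \<otimes>\<^bsub>X\<^esub> z \<otimes>\<^bsub>X\<^esub> inv\<^bsub>X\<^esub> y) * c y z) \<and>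
    (\<forall>x\<in>carrier X. \<forall>y\<in>carrier X. \<forall>z\<in>carrier X.
        c x (y \<otimes>\<^bsub>X\<^esub> z)
        = \<omega> (x \<otimes>\<^bsub>X\<^esub> y \<otimes>\<^bsub>X\<^esub> inv\<^bsub>X\<^esub> x) x z
          / (\<omega> x y z * \<omega> (x \<otimes>\<^bsub>X\<^esub> y \<otimes>\<^bsub>X\<^esub> inv\<^bsub>X\<^esub> x) (x \<otimes>\<^bsub>X\<^esub> z \<otimes>\<^bsub>X\<^esub> inv\<^bsub>X\<^esub> x) x * \<mu> (bd x) y z)
          * c x y * c x z)"

definition conj_act :: "('g,'a) monoid_scheme \<Rightarrow> 'g \<Rightarrow> 'g \<Rightarrow> 'g" where
  "conj_act G g x = g \<otimes>\<^bsub>G\<^esub> x \<otimes>\<^bsub>G\<^esub> inv\<^bsub>G\<^esub> g"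

definition gamma_of :: "('g,'a) monoid_scheme \<Rightarrow> ('g \<Rightarrow> 'g \<Rightarrow> 'g \<Rightarrow> 'k::field) \<Rightarrow> 'g \<Rightarrow> 'g \<Rightarrow> 'g \<Rightarrow> 'k" where
  "gamma_of G \<omega> g h x =
     \<omega> g h x * \<omega> (g \<otimes>\<^bsub>G\<^esub> h \<otimes>\<^bsub>G\<^esub> x \<otimes>\<^bsub>G\<^esub> inv\<^bsub>G\<^esub> h \<otimes>\<^bsub>G\<^esub> inv\<^bsub>G\<^esub> g) g h
     / \<omega> g (h \<otimes>\<^bsub>G\<^esub> x \<otimes>\<^bsub>G\<^esub> inv\<^bsub>G\<^esub> h) h"

definition mu_of :: "('g,'a) monoid_scheme \<Rightarrow> ('g \<Rightarrow> 'g \<Rightarrow> 'g \<Rightarrow> 'k::field) \<Rightarrow> 'g \<Rightarrow> 'g \<Rightarrow> 'g \<Rightarrow> 'k" where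
  "mu_of G \<omega> g x y =
     \<omega> (g \<otimes>\<^bsub>G\<^esub> x \<otimes>\<^bsub>G\<^esub> inv\<^bsub>G\<^esub> g) g y
     / (\<omega> (g \<otimes>\<^bsub>G\<^esub> x \<otimes>\<^bsub>G\<^esub> inv\<^bsub>G\<^esub> g) (g \<otimes>\<^bsub>G\<^esub> y \<otimes>\<^bsub>G\<^esub> inv\<^bsub>G\<^esub> g) g * \<omega> g x y)"

end

theory Submission
  imports Defs
begin

text \<open>The 2-cocycle condition for \<gamma>, the formula for the coboundary of \<mu> and the relation
  between \<gamma> and \<mu> each say that a Laurent monomial in values of \<omega> equals 1, and that monomial is
  a product of four or six values of the coboundary \<open>\<delta>\<omega>\<close>, all of which are 1 since \<omega> is a
  3-cocycle. For \<open>c = 1\<close>, the two conditions expressing \<open>c\<close> on products are the defining formulas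
  of \<gamma> and \<mu>, and the equivariance of \<open>c\<close> holds by cancellation.\<close>

definition coboundary3 ::
  "('g, 'a) monoid_scheme \<Rightarrow> ('g \<Rightarrow> 'g \<Rightarrow> 'g \<Rightarrow> 'k::field) \<Rightarrow> 'g \<Rightarrow> 'g \<Rightarrow> 'g \<Rightarrow> 'g \<Rightarrow> 'k" where
  "coboundary3 G \<omega> w x y z =
     \<omega> x y z * \<omega> w (x \<otimes>\<^bsub>G\<^esub> y) z * \<omega> w x y
     / (\<omega> w x (y \<otimes>\<^bsub>G\<^esub> z) * \<omega> (w \<otimes>\<^bsub>G\<^esub> x) y z)"

lemma (in group) m_inv_cancel_left: "x \<in> carrier G \<Longrightarrow> y \<in> carrier G \<Longrightarrow> x \<otimes> (inv x \<otimes> y) = y"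
  by (simp flip: m_assoc)

lemma (in group) inv_m_cancel_left: "x \<in> carrier G \<Longrightarrow> y \<in> carrier G \<Longrightarrow> inv x \<otimes> (x \<otimes> y) = y"
  by (simp flip: m_assoc)

lemma (in group) conj_act_closed [simp]:
  "g \<in> carrier G \<Longrightarrow> x \<in> carrier G \<Longrightarrow> conj_act G g x \<in> carrier G"
  by (simp add: conj_act_def)

lemmas (in group) group_word_normalize = m_assoc inv_mult_group inv_inv r_inv l_inv l_one r_one
  m_inv_cancel_left inv_m_cancel_left m_closed inv_closed inv_one conj_act_def

locale group_3cocycle = group G for G (structure) +
  fixes \<omega> :: "'a \<Rightarrow> 'a \<Rightarrow> 'a \<Rightarrow> 'k::field"
  assumes cocycle_nonzero [simp]:
      "\<lbrakk>x \<in> carrier G; y \<in> carrier G; z \<in> carrier G\<rbrakk> \<Longrightarrow> \<omega> x y z \<noteq> 0"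
    and cocycle_eq:
      "\<lbrakk>w \<in> carrier G; x \<in> carrier G; y \<in> carrier G; z \<in> carrier G\<rbrakk> \<Longrightarrow>
        \<omega> x y z * \<omega> w (x \<otimes> y) z * \<omega> w x y = \<omega> w x (y \<otimes> z) * \<omega> (w \<otimes> x) y z"

lemma normalized_3cocycle_imp_group_3cocycle:
  "group G \<Longrightarrow> normalized_3cocycle G \<omega> \<Longrightarrow> group_3cocycle G \<omega>"
  unfolding normalized_3cocycle_def group_3cocycle_def group_3cocycle_axioms_def by blast

context group_3cocycle
begin

abbreviation "\<delta> \<equiv> coboundary3 G \<omega>"
abbreviation "\<gamma> \<equiv> gamma_of G \<omega>"
abbreviation "\<mu> \<equiv> mu_of G \<omega>"

lemma coboundary3_eq_1:
  "\<lbrakk>w \<in> carrier G; x \<in> carrier G; y \<in> carrier G; z \<in> carrier G\<rbrakk> \<Longrightarrow> \<delta> w x y z = 1"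
  by (simp add: coboundary3_def cocycle_eq)

lemma gamma_of_nonzero:
  "\<lbrakk>g \<in> carrier G; h \<in> carrier G; x \<in> carrier G\<rbrakk> \<Longrightarrow> \<gamma> g h x \<noteq> 0"
  by (simp add: gamma_of_def)

lemma mu_of_nonzero:
  "\<lbrakk>g \<in> carrier G; x \<in> carrier G; y \<in> carrier G\<rbrakk> \<Longrightarrow> \<mu> g x y \<noteq> 0"
  by (simp add: mu_of_def)

lemma gamma_of_mult:
  assumes [simp]: "g \<in> carrier G" "h \<in> carrier G" "k \<in> carrier G" "x \<in> carrier G"
  shows "\<gamma> h k x * \<gamma> g (h \<otimes> k) x = \<gamma> (g \<otimes> h) k x * \<gamma> g h (conj_act G k x)"
proof -
  txt \<open>An identity of rational functions in the values of \<omega>; the cocycle condition enters only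
    through \<open>\<delta> = 1\<close> afterwards.\<close>
  have "\<gamma> h k x * \<gamma> g (h \<otimes> k) x
      = \<gamma> (g \<otimes> h) k x * \<gamma> g h (conj_act G k x)
        * (\<delta> g h k x * \<delta> g (conj_act G (h \<otimes> k) x) h k
           / (\<delta> g h (conj_act G k x) k * \<delta> (conj_act G (g \<otimes> h \<otimes> k) x) g h k))"
    by (simp add: gamma_of_def coboundary3_def group_word_normalize field_simps)
  then show ?thesis
    by (simp add: coboundary3_eq_1)
qed

lemma mu_of_coboundary:
  assumes [simp]: "g \<in> carrier G" "x \<in> carrier G" "y \<in> carrier G" "z \<in> carrier G"
  shows "(\<mu> g y z * \<mu> g x (y \<otimes> z)) / (\<mu> g (x \<otimes> y) z * \<mu> g x y)
    = \<omega> (conj_act G g x) (conj_act G g y) (conj_act G g z) / \<omega> x y z"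
proof -
  have "(\<mu> g y z * \<mu> g x (y \<otimes> z)) / (\<mu> g (x \<otimes> y) z * \<mu> g x y)
      = \<omega> (conj_act G g x) (conj_act G g y) (conj_act G g z) / \<omega> x y z
        * (\<delta> g x y z * \<delta> (conj_act G g x) (conj_act G g y) g z
           / (\<delta> (conj_act G g x) g y z * \<delta> (conj_act G g x) (conj_act G g y) (conj_act G g z) g))"
    by (simp add: mu_of_def coboundary3_def group_word_normalize field_simps)
  then show ?thesis
    by (simp add: coboundary3_eq_1)
qed

lemma gamma_of_coboundary:
  assumes [simp]: "g \<in> carrier G" "h \<in> carrier G" "x \<in> carrier G" "y \<in> carrier G"
  shows "(\<gamma> g h x * \<gamma> g h y) / \<gamma> g h (x \<otimes> y)
    = (\<mu> g (conj_act G h x) (conj_act G h y) * \<mu> h x y) / \<mu> (g \<otimes> h) x y"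
proof -
  have "(\<gamma> g h x * \<gamma> g h y) / \<gamma> g h (x \<otimes> y)
      = (\<mu> g (conj_act G h x) (conj_act G h y) * \<mu> h x y) / \<mu> (g \<otimes> h) x y
        * (\<delta> g h x y * \<delta> g (conj_act G h x) (conj_act G h y) h
           * \<delta> (conj_act G (g \<otimes> h) x) g h y
           * \<delta> (conj_act G (g \<otimes> h) x) (conj_act G (g \<otimes> h) y) g h
           / (\<delta> g (conj_act G h x) h y * \<delta> (conj_act G (g \<otimes> h) x) g (conj_act G h y) h))"
    by (simp add: gamma_of_def mu_of_def coboundary3_def group_word_normalize field_simps)
  then show ?thesis
    by (simp add: coboundary3_eq_1)
qed

lemma mu_of_gamma_of_conj_act:
  assumes [simp]: "g \<in> carrier G" "x \<in> carrier G" "y \<in> carrier G"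
  shows "\<mu> g (conj_act G x y) x / \<mu> g x y * (\<gamma> (conj_act G g x) g y / \<gamma> g x y) = 1"
  by (simp add: gamma_of_def mu_of_def group_word_normalize field_simps)

lemma quasi_abelian_3cocycle_conj_act:
  "quasi_abelian_3cocycle G G (conj_act G) (\<lambda>x. x) \<omega> \<gamma> \<mu> (\<lambda>x y. 1)"
  unfolding quasi_abelian_3cocycle_def
  using gamma_of_nonzero mu_of_nonzero cocycle_eq gamma_of_mult mu_of_coboundary
    gamma_of_coboundary mu_of_gamma_of_conj_act
  by (simp add: conj_act_def) (simp add: gamma_of_def mu_of_def group_word_normalize field_simps)

end

theorem lemma6p3:
  fixes G :: "('g, 'a) monoid_scheme"
    and \<omega> :: "'g \<Rightarrow> 'g \<Rightarrow> 'g \<Rightarrow> 'k::field_char_0"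
  assumes "alg_closed TYPE('k)"
    and "group G"
    and "finite (carrier G)"
    and "normalized_3cocycle G \<omega>"
  shows "quasi_abelian_3cocycle G G (conj_act G) (\<lambda>x. x) \<omega> (gamma_of G \<omega>) (mu_of G \<omega>) (\<lambda>x y. 1)"
proof -
  interpret group_3cocycle G \<omega>
    using assms(2,4) by (rule normalized_3cocycle_imp_group_3cocycle)
  show ?thesis
    by (rule quasi_abelian_3cocycle_conj_act)
qed

end
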